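(* In the process algebra $\mathcal{G}$ described in the context, suppose $C\|Z\mathbb{P}_v^{1}\approx C\|Z\mathbb{P}_v^{2}\mathbb{P}_u^{2}$ for some $\mathbb{P}_v^{1},\mathbb{P}_v^{2}$ (each a possibly empty sequential composition of constants from $\{V_k:k\in\mathcal{N}\}$) and some nonempty sequential composition $\mathbb{P}_u^{2}\neq\epsilon$ of constants from $\{U_k:k\in\mathcal{N}\}$. Then INST has a solution.
   Context: Process algebras: a triple $(\mathcal{C},\mathcal{A},\Delta)$ of finitely many constants, actions (including silent $\tau$) and rules $X\stackrel{\ell}{\longrightarrow}P$. Processes: $P::=\epsilon\mid X\mid PP'\mid P\|P'$, sequential composition associative, parallel composition associative and commutative, $\epsilon$ a unit for both. Semantics: rules of $\Delta$; if $P\stackrel{\ell}{\longrightarrow}P'$ then $PQ\stackrel{\ell}{\longrightarrow}P'Q$, $P\|Q\stackrel{\ell}{\longrightarrow}P'\|Q$, $Q\|P\stackrel{\ell}{\longrightarrow}Q\|P'$. $\Longrightarrow$ is the reflexive transitive closure of $\stackrel{\tau}{\longrightarrow}$; $\stackrel{\widehat{\ell}}{\Longrightarrow}$ is $\Longrightarrow\stackrel{\ell}{\longrightarrow}\Longrightarrow$ if $\ell\ne\tau$ and $\Longrightarrow$ if $\ell=\tau$. Weak bisimilarity $\approx$ is the largest relation $\mathcal{B}$ such that whenever $P\mathcal{B}Q$ and $P\stackrel{\ell}{\longrightarrow}P'$ there is $Q'$ with $Q\stackrel{\widehat{\ell}}{\Longrightarrow}Q'$, $P'\mathcal{B}Q'$,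 and symmetrically. The algebra $\mathcal{G}$: fix a finite alphabet $\Sigma$ with $|\Sigma|\ge2$ and a Post Correspondence instance $\mathrm{INST}=\{(u_1,v_1),\dots,(u_n,v_n)\}$ with $u_k,v_k\in\Sigma^{+}$; INST has a solution if there exist $m\ge1$ and $i_1,\dots,i_m\in\{1,\dots,n\}$ with $u_{i_1}\cdots u_{i_m}=v_{i_1}\cdots v_{i_m}$. Let $\mathcal{N}=\{1,\dots,n\}$. Actions: $\{\lambda_U,\lambda_V,\lambda_D,\lambda_I,\lambda_S,\lambda_Z\}\cup\mathcal{N}\cup\Sigma\cup\{\tau\}$. Constants: $X,Y,Z,I,S,C,C',D,G,G',G_u,G_v,G_v'$, $U_k,V_k$ ($k\in\mathcal{N}$), and $W(\omega,k),W(\omega,0)$ for $k\in\mathcal{N}$ and $\omega$ a (possibly empty) suffix of $u_k$ or of $v_k$; $\mathcal{W}$ is the set of these $W$-constants. Rules (with $k$ ranging over $\mathcal{N}$, $a$ over $\Sigma$, $W$ over $\mathcal{W}$): $X\stackrel{\lambda_U}{\longrightarrow}D\|G_v$, $X\stackrel{\tau}{\longrightarrow}D$, $Y\stackrel{\tau}{\longrightarrow}D$, $D\stackrel{\tau}{\longrightarrow}D\|G_u$, $D\stackrel{\lambda_D}{\longrightarrow}C$; $G_u\stackrel{\tau}{\longrightarrow}G_uU_k$, $G_u\stackrel{\lambda_U}{\longrightarrow}G_vU_k$, $G_u\stackrel{\tau}{\longrightarrow}G_v'$, $G_v'\stackrel{\tau}{\longrightarrow}G_v'V_k$, $G_v'\stackrel{\tau}{\longrightarrow}Z$;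 $G_v\stackrel{\tau}{\longrightarrow}G_vV_k$, $G_v\stackrel{\tau}{\longrightarrow}\epsilon$, $G_v\stackrel{\lambda_V}{\longrightarrow}Z$, $Z\stackrel{\tau}{\longrightarrow}\epsilon$, $Z\stackrel{\lambda_Z}{\longrightarrow}\epsilon$; $C\stackrel{\lambda_I}{\longrightarrow}I$, $C\stackrel{\lambda_S}{\longrightarrow}S$, $C\stackrel{\tau}{\longrightarrow}C\|G$, $C\stackrel{\tau}{\longrightarrow}C\|G_v$; $G\stackrel{\tau}{\longrightarrow}GU_k$, $G\stackrel{\tau}{\longrightarrow}GV_k$, $G\stackrel{\tau}{\longrightarrow}\epsilon$; $I\stackrel{\lambda_I}{\longrightarrow}C'$, $I\stackrel{k}{\longrightarrow}I$, $S\stackrel{\lambda_S}{\longrightarrow}C'$, $S\stackrel{a}{\longrightarrow}S$, $C'\stackrel{\tau}{\longrightarrow}C'\|G'$, $C'\stackrel{\tau}{\longrightarrow}\epsilon$; $G'\stackrel{\tau}{\longrightarrow}G'U_k$, $G'\stackrel{\tau}{\longrightarrow}G'V_k$, $G'\stackrel{\tau}{\longrightarrow}G'W$, $G'\stackrel{\tau}{\longrightarrow}G_v$, $G'\stackrel{\tau}{\longrightarrow}Z$; $U_k\stackrel{\tau}{\longrightarrow}W(u_k,k)$, $V_k\stackrel{\tau}{\longrightarrow}W(v_k,k)$; $W(a\omega,k)\stackrel{a}{\longrightarrow}W(\omega,k)$, $W(a\omega,0)\stackrel{a}{\longrightarrow}W(\omega,0)$, $W(\omega,k)\stackrel{k}{\longrightarrow}W(\omega,0)$,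 $W(a\omega,k)\stackrel{\tau}{\longrightarrow}W(\omega,k)$, $W(a\omega,0)\stackrel{\tau}{\longrightarrow}W(\omega,0)$, $W(\omega,k)\stackrel{\tau}{\longrightarrow}W(\omega,0)$, $W(\epsilon,0)\stackrel{\tau}{\longrightarrow}\epsilon$. *)

theory Defs
  imports Main "HOL-Library.Sublist" "HOL-Library.Cardinality"
begin

datatype 'c proc = Eps | Cst 'c | Seq "'c proc" "'c proc" | Par "'c proc" "'c proc"

datatype 'a lab = Tau | Act 'a

inductive scong :: "'c proc \<Rightarrow> 'c proc \<Rightarrow> bool" where
  sc_refl: "scong P P"
| sc_sym: "scong P Q \<Longrightarrow> scong Q P"
| sc_trans: "scong P Q \<Longrightarrow> scong Q R \<Longrightarrow> scong P R"
| sc_seq_assoc: "scong (Seq (Seq P Q) R) (Seq P (Seq Q R))"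
| sc_par_assoc: "scong (Par (Par P Q) R) (Par P (Par Q R))"
| sc_par_comm: "scong (Par P Q) (Par Q P)"
| sc_seq_unitl: "scong (Seq Eps P) P"
| sc_seq_unitr: "scong (Seq P Eps) P"
| sc_par_unit: "scong (Par Eps P) P"
| sc_seq_cong: "scong P P' \<Longrightarrow> scong Q Q' \<Longrightarrow> scong (Seq P Q) (Seq P' Q')"
| sc_par_cong: "scong P P' \<Longrightarrow> scong Q Q' \<Longrightarrow> scong (Par P Q) (Par P' Q')"

inductive step :: "('c \<times> 'a lab \<times> 'c proc) set \<Rightarrow> 'c proc \<Rightarrow> 'a lab \<Rightarrow> 'c proc \<Rightarrow> bool"
  for \<Delta> :: "('c \<times> 'a lab \<times> 'c proc) set" where
  st_rule: "(X, l, P) \<in> \<Delta> \<Longrightarrow> step \<Delta> (Cst X) l P"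
| st_seq: "step \<Delta> P l P' \<Longrightarrow> step \<Delta> (Seq P Q) l (Seq P' Q)"
| st_parl: "step \<Delta> P l P' \<Longrightarrow> step \<Delta> (Par P Q) l (Par P' Q)"
| st_parr: "step \<Delta> P l P' \<Longrightarrow> step \<Delta> (Par Q P) l (Par Q P')"
| st_cong: "scong P P0 \<Longrightarrow> step \<Delta> P0 l Q0 \<Longrightarrow> scong Q0 Q \<Longrightarrow> step \<Delta> P l Q"

definition tau_steps :: "('c \<times> 'a lab \<times> 'c proc) set \<Rightarrow> 'c proc \<Rightarrow> 'c proc \<Rightarrow> bool" where
  "tau_steps \<Delta> = (\<lambda>P Q. step \<Delta> P Tau Q)\<^sup>*\<^sup>*"

definition wstep :: "('c \<times> 'a lab \<times> 'c proc) set \<Rightarrow> 'c proc \<Rightarrow> 'a lab \<Rightarrow> 'c proc \<Rightarrow> bool" where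
  "wstep \<Delta> P l Q \<longleftrightarrow>
     (if l = Tau then tau_steps \<Delta> P Q
      else (\<exists>P1 P2. tau_steps \<Delta> P P1 \<and> step \<Delta> P1 l P2 \<and> tau_steps \<Delta> P2 Q))"

definition weak_bisim :: "('c \<times> 'a lab \<times> 'c proc) set \<Rightarrow> ('c proc \<Rightarrow> 'c proc \<Rightarrow> bool) \<Rightarrow> bool" where
  "weak_bisim \<Delta> R \<longleftrightarrow> (\<forall>P Q. R P Q \<longrightarrow>
      (\<forall>l P'. step \<Delta> P l P' \<longrightarrow> (\<exists>Q'. wstep \<Delta> Q l Q' \<and> R P' Q')) \<and>
      (\<forall>l Q'. step \<Delta> Q l Q' \<longrightarrow> (\<exists>P'. wstep \<Delta> P l P' \<and> R P' Q')))"

definition wbisimilar :: "('c \<times> 'a lab \<times> 'c proc) set \<Rightarrow> 'c proc \<Rightarrow> 'c proc \<Rightarrow> bool" where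
  "wbisimilar \<Delta> P Q \<longleftrightarrow> (\<exists>R. weak_bisim \<Delta> R \<and> R P Q)"

fun seqs :: "'c list \<Rightarrow> 'c proc" where
  "seqs [] = Eps"
| "seqs (c # cs) = Seq (Cst c) (seqs cs)"

definition pcp_solvable :: "nat \<Rightarrow> (nat \<Rightarrow> 's list) \<Rightarrow> (nat \<Rightarrow> 's list) \<Rightarrow> bool" where
  "pcp_solvable n u v \<longleftrightarrow>
     (\<exists>is. is \<noteq> [] \<and> set is \<subseteq> {1..n} \<and> concat (map u is) = concat (map v is))"

datatype 's gact = LamU | LamV | LamD | LamI | LamS | LamZ | Num nat | Sym 's

text \<open>cW w 0 stands for W(w,0); cW w k for W(w,k) with k in {1..n}.\<close>
datatype 's gcon = cX | cY | cZ | cI | cS | cC | cC' | cD | cG | cG' | cGu | cGv | cGv'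
  | cU nat | cV nat | cW "'s list" nat

definition isW :: "nat \<Rightarrow> (nat \<Rightarrow> 's list) \<Rightarrow> (nat \<Rightarrow> 's list) \<Rightarrow> 's gcon \<Rightarrow> bool" where
  "isW n u v c \<longleftrightarrow> (\<exists>k w j. c = cW w j \<and> k \<in> {1..n} \<and> (suffix w (u k) \<or> suffix w (v k))
                         \<and> (j = k \<or> j = 0))"

inductive gRule :: "nat \<Rightarrow> (nat \<Rightarrow> 's list) \<Rightarrow> (nat \<Rightarrow> 's list) \<Rightarrow> 's gcon \<Rightarrow> 's gact lab \<Rightarrow> 's gcon proc \<Rightarrow> bool"
  for n :: nat and u v :: "nat \<Rightarrow> 's list" where
  "gRule n u v cX (Act LamU) (Par (Cst cD) (Cst cGv))"
| "gRule n u v cX Tau (Cst cD)"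
| "gRule n u v cY Tau (Cst cD)"
| "gRule n u v cD Tau (Par (Cst cD) (Cst cGu))"
| "gRule n u v cD (Act LamD) (Cst cC)"
| "k \<in> {1..n} \<Longrightarrow> gRule n u v cGu Tau (Seq (Cst cGu) (Cst (cU k)))"
| "k \<in> {1..n} \<Longrightarrow> gRule n u v cGu (Act LamU) (Seq (Cst cGv) (Cst (cU k)))"
| "gRule n u v cGu Tau (Cst cGv')"
| "k \<in> {1..n} \<Longrightarrow> gRule n u v cGv' Tau (Seq (Cst cGv') (Cst (cV k)))"
| "gRule n u v cGv' Tau (Cst cZ)"
| "k \<in> {1..n} \<Longrightarrow> gRule n u v cGv Tau (Seq (Cst cGv) (Cst (cV k)))"
| "gRule n u v cGv Tau Eps"
| "gRule n u v cGv (Act LamV) (Cst cZ)"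
| "gRule n u v cZ Tau Eps"
| "gRule n u v cZ (Act LamZ) Eps"
| "gRule n u v cC (Act LamI) (Cst cI)"
| "gRule n u v cC (Act LamS) (Cst cS)"
| "gRule n u v cC Tau (Par (Cst cC) (Cst cG))"
| "gRule n u v cC Tau (Par (Cst cC) (Cst cGv))"
| "k \<in> {1..n} \<Longrightarrow> gRule n u v cG Tau (Seq (Cst cG) (Cst (cU k)))"
| "k \<in> {1..n} \<Longrightarrow> gRule n u v cG Tau (Seq (Cst cG) (Cst (cV k)))"
| "gRule n u v cG Tau Eps"
| "gRule n u v cI (Act LamI) (Cst cC')"
| "k \<in> {1..n} \<Longrightarrow> gRule n u v cI (Act (Num k)) (Cst cI)"
| "gRule n u v cS (Act LamS) (Cst cC')"
| "gRule n u v cS (Act (Sym a)) (Cst cS)"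
| "gRule n u v cC' Tau (Par (Cst cC') (Cst cG'))"
| "gRule n u v cC' Tau Eps"
| "k \<in> {1..n} \<Longrightarrow> gRule n u v cG' Tau (Seq (Cst cG') (Cst (cU k)))"
| "k \<in> {1..n} \<Longrightarrow> gRule n u v cG' Tau (Seq (Cst cG') (Cst (cV k)))"
| "isW n u v W \<Longrightarrow> gRule n u v cG' Tau (Seq (Cst cG') (Cst W))"
| "gRule n u v cG' Tau (Cst cGv)"
| "gRule n u v cG' Tau (Cst cZ)"
| "k \<in> {1..n} \<Longrightarrow> gRule n u v (cU k) Tau (Cst (cW (u k) k))"
| "k \<in> {1..n} \<Longrightarrow> gRule n u v (cV k) Tau (Cst (cW (v k) k))"
| "k \<in> {1..n} \<Longrightarrow> isW n u v (cW (a # w) k) \<Longrightarrow> gRule n u v (cW (a # w) k) (Act (Sym a)) (Cst (cW w k))"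
| "isW n u v (cW (a # w) 0) \<Longrightarrow> gRule n u v (cW (a # w) 0) (Act (Sym a)) (Cst (cW w 0))"
| "k \<in> {1..n} \<Longrightarrow> isW n u v (cW w k) \<Longrightarrow> gRule n u v (cW w k) (Act (Num k)) (Cst (cW w 0))"
| "k \<in> {1..n} \<Longrightarrow> isW n u v (cW (a # w) k) \<Longrightarrow> gRule n u v (cW (a # w) k) Tau (Cst (cW w k))"
| "isW n u v (cW (a # w) 0) \<Longrightarrow> gRule n u v (cW (a # w) 0) Tau (Cst (cW w 0))"
| "k \<in> {1..n} \<Longrightarrow> isW n u v (cW w k) \<Longrightarrow> gRule n u v (cW w k) Tau (Cst (cW w 0))"
| "isW n u v (cW [] 0) \<Longrightarrow> gRule n u v (cW [] 0) Tau Eps"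

definition gDelta :: "nat \<Rightarrow> (nat \<Rightarrow> 's list) \<Rightarrow> (nat \<Rightarrow> 's list) \<Rightarrow> ('s gcon \<times> 's gact lab \<times> 's gcon proc) set" where
  "gDelta n u v = {(X, l, P). gRule n u v X l P}"

end

theory Submission
  imports Defs "HOL-Library.Multiset"
begin

text \<open>Let X = C || Z P1 and Y = C || Z P2 U with P1, P2 sequences of V-constants and U a
  nonempty sequence of U-constants. When Y chooses lambda_S (lambda_I), X must answer with the
  same action while keeping its Z thread: everything else C can spawn is unable to perform
  lambda_Z, which Y can still do. After lambda_Z, X can emit the indices (letters) of P1, and Y
  must match this with its thread Z P2 U alone, since S loops only on letters and I only on
  indices. Hence the index sequence and the word of P1 are subsequences of those of P2 U, and by
  symmetry equal. Comparing indices gives P1 = P2 U; comparing words gives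
  v(P2) u(U) = v(P2) v(U), so U is a solution of the instance.\<close>

text \<open>threads P is the multiset of nonempty threads t, each standing for seqs t, whose parallel
  composition is structurally congruent to P; it is None when P sequentially composes a component
  having two or more threads with a nonempty one.\<close>

definition thread :: "'c list \<Rightarrow> 'c list multiset" where
  "thread xs = (if xs = [] then {#} else {#xs#})"

definition par_threads :: "'c list multiset option \<Rightarrow> 'c list multiset option \<Rightarrow> 'c list multiset option" where
  "par_threads a b = (case (a, b) of (Some A, Some B) \<Rightarrow> Some (A + B) | _ \<Rightarrow> None)"

definition seq_threads :: "'c list multiset option \<Rightarrow> 'c list multiset option \<Rightarrow> 'c list multiset option" where
  "seq_threads a b = (case (a, b) of
     (Some A, Some B) \<Rightarrow>
       if A = {#} then Some B else if B = {#} then Some A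
       else if size A = 1 \<and> size B = 1 then Some {#the_elem (set_mset A) @ the_elem (set_mset B)#}
       else None
   | _ \<Rightarrow> None)"

lemma par_threads_simps [simp]:
  "par_threads (Some A) (Some B) = Some (A + B)" "par_threads None b = None" "par_threads a None = None"
  by (auto simp: par_threads_def split: option.splits)

lemma par_threads_Some_iff: "par_threads a b = Some C \<longleftrightarrow> (\<exists>A B. a = Some A \<and> b = Some B \<and> C = A + B)"
  by (auto simp: par_threads_def split: option.splits)

lemma par_threads_commute: "par_threads a b = par_threads b a"
  by (auto simp: par_threads_def add.commute split: option.splits)

lemma par_threads_assoc: "par_threads (par_threads a b) c = par_threads a (par_threads b c)"
  by (auto simp: par_threads_def add.assoc split: option.splits)

lemma par_threads_empty [simp]: "par_threads (Some {#}) a = a" "par_threads a (Some {#}) = a"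
  by (auto simp: par_threads_def split: option.splits)

lemma seq_threads_simps [simp]:
  "seq_threads None b = None" "seq_threads a None = None"
  "seq_threads (Some {#}) b = b" "seq_threads a (Some {#}) = a"
  "seq_threads (Some {#x#}) (Some {#y#}) = Some {#x @ y#}"
  by (auto simp: seq_threads_def split: option.splits)

lemma size_eq_Suc_0_iff: "size A = Suc 0 \<longleftrightarrow> (\<exists>x. A = {#x#})"
  using size_1_singleton_mset[of A] by auto

lemma seq_threads_Some_iff: "seq_threads a b = Some C \<longleftrightarrow> (\<exists>A B. a = Some A \<and> b = Some B \<and>
   (A = {#} \<and> C = B \<or> A \<noteq> {#} \<and> B = {#} \<and> C = A \<or> (\<exists>x y. A = {#x#} \<and> B = {#y#} \<and> C = {#x @ y#})))"
  by (auto simp: seq_threads_def size_eq_Suc_0_iff split: option.splits if_splits)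

lemma seq_threads_assoc: "seq_threads (seq_threads a b) c = seq_threads a (seq_threads b c)"
proof (cases "seq_threads a (seq_threads b c)")
  case None
  then show ?thesis
    by (cases "seq_threads (seq_threads a b) c") (auto simp: seq_threads_Some_iff)
qed (auto simp: seq_threads_Some_iff)

fun threads :: "'c proc \<Rightarrow> 'c list multiset option" where
  "threads Eps = Some {#}"
| "threads (Cst c) = Some {#[c]#}"
| "threads (Par P Q) = par_threads (threads P) (threads Q)"
| "threads (Seq P Q) = seq_threads (threads P) (threads Q)"

lemma threads_seqs [simp]: "threads (seqs xs) = Some (thread xs)"
  by (induction xs) (auto simp: thread_def)

lemma threads_scong: "scong P Q \<Longrightarrow> threads P = threads Q"
proof (induction rule: scong.induct)
  case (sc_par_comm P Q)
  show ?case using par_threads_commute by simp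
qed (simp_all add: seq_threads_assoc par_threads_assoc)

lemma threads_nonempty: "threads P = Some M \<Longrightarrow> [] \<notin># M"
  by (induction P arbitrary: M)
    (fastforce simp: seq_threads_Some_iff par_threads_Some_iff)+

declare sc_trans [trans]

lemma threads_Some_Eps_imp_scong: "threads P = Some {#} \<Longrightarrow> scong P Eps"
proof (induction P)
  case (Seq P Q)
  then have "scong (Seq P Q) (Seq Eps Eps)" by (intro sc_seq_cong) (auto simp: seq_threads_Some_iff)
  also have "scong \<dots> Eps" by (rule sc_seq_unitl)
  finally show ?case .
next
  case (Par P Q)
  then have "scong (Par P Q) (Par Eps Eps)" by (intro sc_par_cong) (auto simp: par_threads_Some_iff)
  also have "scong \<dots> Eps" by (rule sc_par_unit)
  finally show ?case .
qed (auto intro: sc_refl)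

lemma scong_Par_Eps: "scong P (Par P Eps)"
proof -
  have "scong P (Par Eps P)" by (rule sc_sym[OF sc_par_unit])
  also have "scong \<dots> (Par P Eps)" by (rule sc_par_comm)
  finally show ?thesis .
qed

lemma scong_seqs_append: "scong (seqs (xs @ ys)) (Seq (seqs xs) (seqs ys))"
proof (induction xs)
  case Nil
  show ?case using sc_sym[OF sc_seq_unitl] by simp
next
  case (Cons x xs)
  have "scong (seqs ((x # xs) @ ys)) (Seq (Cst x) (Seq (seqs xs) (seqs ys)))"
    using sc_seq_cong[OF sc_refl Cons.IH] by simp
  also have "scong \<dots> (Seq (seqs (x # xs)) (seqs ys))"
    using sc_sym[OF sc_seq_assoc] by simp
  finally show ?case .
qed

lemma scong_Par_threads_empty: "threads Q = Some {#} \<Longrightarrow> scong (Par P Q) P"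
  using sc_trans[OF sc_par_cong[OF sc_refl threads_Some_Eps_imp_scong] sc_sym[OF scong_Par_Eps]] .

lemma threads_Seq_cases:
  assumes "threads (Seq P1 P2) = Some M"
  obtains (left_Eps) "scong (Seq P1 P2) P2" "threads P1 = Some {#}" "threads P2 = Some M"
  | (right_Eps) "scong (Seq P1 P2) P1" "threads P1 = Some M" "threads P2 = Some {#}"
  | (single) x y where "threads P1 = Some {#x#}" "threads P2 = Some {#y#}" "M = {#x @ y#}"
proof -
  obtain A B where AB: "threads P1 = Some A" "threads P2 = Some B"
    and "A = {#} \<and> M = B \<or> A \<noteq> {#} \<and> B = {#} \<and> M = A
      \<or> (\<exists>x y. A = {#x#} \<and> B = {#y#} \<and> M = {#x @ y#})"
    using assms by (auto simp: seq_threads_Some_iff)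
  then consider "A = {#}" "M = B" | "B = {#}" "M = A" | x y where "A = {#x#}" "B = {#y#}" "M = {#x @ y#}"
    by blast
  then show thesis
  proof cases
    case 1
    then have "scong (Seq P1 P2) (Seq Eps P2)"
      using threads_Some_Eps_imp_scong AB by (intro sc_seq_cong sc_refl) simp
    also have "scong \<dots> P2" by (rule sc_seq_unitl)
    finally show thesis using left_Eps AB 1 by simp
  next
    case 2
    then have "scong (Seq P1 P2) (Seq P1 Eps)"
      using threads_Some_Eps_imp_scong AB by (intro sc_seq_cong sc_refl) simp
    also have "scong \<dots> P1" by (rule sc_seq_unitr)
    finally show thesis using right_Eps AB 2 by simp
  next
    case 3
    then show thesis using single AB by simp
  qed
qed

lemma threads_decompose:
  assumes "threads P = Some M" and "t \<in># M"
  shows "\<exists>Q. scong P (Par (seqs t) Q) \<and> threads Q = Some (M - {#t#})"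
  using assms
proof (induction P arbitrary: M t)
  case (Cst c)
  then have "t = [c]" "M = {#[c]#}" by auto
  moreover have "scong (Cst c) (Par (seqs [c]) Eps)"
    using sc_trans[OF sc_sym[OF sc_seq_unitr] scong_Par_Eps] by simp
  ultimately show ?case by auto
next
  case (Par P1 P2)
  then obtain A B where AB: "threads P1 = Some A" "threads P2 = Some B" "M = A + B"
    by (auto simp: par_threads_Some_iff)
  show ?case
  proof (cases "t \<in># A")
    case True
    with Par.IH(1) AB obtain Q where Q: "scong P1 (Par (seqs t) Q)" "threads Q = Some (A - {#t#})"
      by blast
    have "scong (Par P1 P2) (Par (Par (seqs t) Q) P2)" using Q(1) by (simp add: sc_par_cong sc_refl)
    also have "scong \<dots> (Par (seqs t) (Par Q P2))" by (rule sc_par_assoc)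
    finally show ?thesis using AB Q(2) True by auto
  next
    case False
    with Par.prems AB have "t \<in># B" by simp
    with Par.IH(2) AB obtain Q where Q: "scong P2 (Par (seqs t) Q)" "threads Q = Some (B - {#t#})"
      by blast
    have "scong (Par P1 P2) (Par P2 P1)" by (rule sc_par_comm)
    also have "scong \<dots> (Par (Par (seqs t) Q) P1)" using Q(1) by (simp add: sc_par_cong sc_refl)
    also have "scong \<dots> (Par (seqs t) (Par Q P1))" by (rule sc_par_assoc)
    finally show ?thesis using AB Q(2) \<open>t \<in># B\<close> by (auto simp: add.commute)
  qed
next
  case (Seq P1 P2)
  from Seq.prems(1) show ?case
  proof (cases rule: threads_Seq_cases)
    case left_Eps
    with Seq.IH(2) Seq.prems(2) show ?thesis using sc_trans by blast
  next
    case right_Eps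
    with Seq.IH(1) Seq.prems(2) show ?thesis using sc_trans by blast
  next
    case (single x y)
    from Seq.IH(1)[OF single(1), of x] obtain Q1 where
      "scong P1 (Par (seqs x) Q1)" "threads Q1 = Some {#}" by auto
    then have "scong P1 (seqs x)" using sc_trans scong_Par_threads_empty by blast
    from Seq.IH(2)[OF single(2), of y] obtain Q2 where
      "scong P2 (Par (seqs y) Q2)" "threads Q2 = Some {#}" by auto
    then have "scong P2 (seqs y)" using sc_trans scong_Par_threads_empty by blast
    with \<open>scong P1 (seqs x)\<close> have "scong (Seq P1 P2) (Seq (seqs x) (seqs y))"
      by (rule sc_seq_cong)
    also have "scong \<dots> (seqs (x @ y))" using scong_seqs_append by (rule sc_sym)
    also have "scong \<dots> (Par (seqs (x @ y)) Eps)" by (rule scong_Par_Eps)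
    finally show ?thesis using single Seq.prems(2) by (intro exI[of _ Eps]) simp
  qed
qed simp

lemma step_threads_complete:
  assumes "threads P = Some M" and "c # rest \<in># M" and "(c, l, R) \<in> \<Delta>"
  shows "\<exists>P'. step \<Delta> P l P' \<and>
           threads P' = par_threads (Some (M - {#c # rest#})) (threads (Seq R (seqs rest)))"
proof -
  obtain Q where Q: "scong P (Par (Seq (Cst c) (seqs rest)) Q)" "threads Q = Some (M - {#c # rest#})"
    using threads_decompose[OF assms(1,2)] by auto
  have "step \<Delta> (Par (Seq (Cst c) (seqs rest)) Q) l (Par (Seq R (seqs rest)) Q)"
    using assms(3) by (intro st_parl st_seq st_rule)
  then have "step \<Delta> P l (Par (Seq R (seqs rest)) Q)"
    using Q(1) sc_refl st_cong by blast
  then show ?thesis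
    using Q(2) par_threads_commute by fastforce
qed

lemma par_threads_fire:
  assumes "t \<in># A"
  shows "par_threads (par_threads (Some (A - {#t#})) N) (Some B) = par_threads (Some (A + B - {#t#})) N"
  using assms by (cases N) (simp_all add: add.commute add.left_commute)

lemma step_threads_sound:
  assumes "step \<Delta> P l P'" and "threads P = Some M"
  shows "\<exists>c rest R. c # rest \<in># M \<and> (c, l, R) \<in> \<Delta> \<and>
           threads P' = par_threads (Some (M - {#c # rest#})) (threads (Seq R (seqs rest)))"
  using assms
proof (induction arbitrary: M rule: step.induct)
  case (st_rule X l P)
  then show ?case by (auto simp: thread_def)
next
  case (st_seq P l P' Q)
  from st_seq.prems show ?case
  proof (cases rule: threads_Seq_cases)
    case left_Eps
    with st_seq.IH show ?thesis by fastforce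
  next
    case right_Eps
    with st_seq.IH show ?thesis by auto
  next
    case (single x y)
    from st_seq.IH[OF single(1)] obtain c rest R where fired: "x = c # rest" "(c, l, R) \<in> \<Delta>"
      "threads P' = threads (Seq R (seqs rest))"
      by auto
    have "y \<noteq> []" using threads_nonempty[OF single(2)] by auto
    then have "threads (Seq P' Q) = threads (Seq (Seq R (seqs rest)) (seqs y))"
      using fired(3) single(2) by (simp add: thread_def)
    also have "\<dots> = threads (Seq R (seqs (rest @ y)))"
      using threads_scong sc_seq_assoc sc_seq_cong[OF sc_refl scong_seqs_append] by metis
    finally show ?thesis using single(3) fired by auto
  qed
next
  case (st_parl P l P' Q)
  then obtain A B where AB: "threads P = Some A" "threads Q = Some B" "M = A + B"
    by (auto simp: par_threads_Some_iff)
  from st_parl.IH[OF AB(1)] obtain c rest R where fired: "c # rest \<in># A" "(c, l, R) \<in> \<Delta>"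
    "threads P' = par_threads (Some (A - {#c # rest#})) (threads (Seq R (seqs rest)))"
    by blast
  then have "threads (Par P' Q) = par_threads (Some (M - {#c # rest#})) (threads (Seq R (seqs rest)))"
    using AB par_threads_fire[OF fired(1)] by simp
  with fired AB(3) show ?case by auto
next
  case (st_parr P l P' Q)
  then obtain A B where AB: "threads P = Some A" "threads Q = Some B" "M = B + A"
    by (auto simp: par_threads_Some_iff)
  from st_parr.IH[OF AB(1)] obtain c rest R where fired: "c # rest \<in># A" "(c, l, R) \<in> \<Delta>"
    "threads P' = par_threads (Some (A - {#c # rest#})) (threads (Seq R (seqs rest)))"
    by blast
  then have "threads (Par Q P') = par_threads (Some (M - {#c # rest#})) (threads (Seq R (seqs rest)))"
    using AB par_threads_fire[OF fired(1)] par_threads_commute[of "Some B"] by (simp add: add.commute)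
  with fired AB(3) show ?case by auto
next
  case (st_cong P P0 l Q0 Q)
  then have "threads P0 = Some M" using threads_scong by metis
  with st_cong.IH obtain c rest R where "c # rest \<in># M" "(c, l, R) \<in> \<Delta>"
    "threads Q0 = par_threads (Some (M - {#c # rest#})) (threads (Seq R (seqs rest)))"
    by blast
  moreover have "threads Q = threads Q0" using st_cong(3) threads_scong by metis
  ultimately show ?case by auto
qed

fun lab_trace :: "'a lab \<Rightarrow> 'a list" where
  "lab_trace Tau = []"
| "lab_trace (Act a) = [a]"

inductive weak_trace :: "('c \<times> 'a lab \<times> 'c proc) set \<Rightarrow> 'c proc \<Rightarrow> 'a list \<Rightarrow> 'c proc \<Rightarrow> bool"
  for \<Delta> where
  weak_trace_Nil: "weak_trace \<Delta> P [] P"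
| weak_trace_step: "step \<Delta> P l P' \<Longrightarrow> weak_trace \<Delta> P' t Q \<Longrightarrow> weak_trace \<Delta> P (lab_trace l @ t) Q"

lemma weak_trace_tau_step: "step \<Delta> P Tau P' \<Longrightarrow> weak_trace \<Delta> P' t Q \<Longrightarrow> weak_trace \<Delta> P t Q"
  using weak_trace_step[of \<Delta> P Tau] by simp

lemma weak_trace_act_step:
  "step \<Delta> P (Act a) P' \<Longrightarrow> weak_trace \<Delta> P' t Q \<Longrightarrow> weak_trace \<Delta> P (a # t) Q"
  using weak_trace_step[of \<Delta> P "Act a"] by simp

lemma tau_steps_weak_trace: "tau_steps \<Delta> P Q \<Longrightarrow> weak_trace \<Delta> Q t R \<Longrightarrow> weak_trace \<Delta> P t R"
  unfolding tau_steps_def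
  by (induction rule: converse_rtranclp_induct) (auto intro: weak_trace_tau_step)

lemma weak_trace_append:
  "weak_trace \<Delta> P t1 Q \<Longrightarrow> weak_trace \<Delta> Q t2 R \<Longrightarrow> weak_trace \<Delta> P (t1 @ t2) R"
  by (induction rule: weak_trace.induct) (auto intro: weak_trace.intros)

lemma wstep_weak_trace:
  assumes "wstep \<Delta> P l Q" and "weak_trace \<Delta> Q t R"
  shows "weak_trace \<Delta> P (lab_trace l @ t) R"
proof (cases l)
  case Tau
  then show ?thesis using assms tau_steps_weak_trace by (fastforce simp: wstep_def)
next
  case (Act a)
  with assms(1) obtain P1 P2 where
    "tau_steps \<Delta> P P1" "step \<Delta> P1 (Act a) P2" "tau_steps \<Delta> P2 Q"
    by (auto simp: wstep_def)
  then show ?thesis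
    using Act assms(2) by (auto intro: tau_steps_weak_trace weak_trace_act_step)
qed

lemma weak_bisim_converse: "weak_bisim \<Delta> R \<Longrightarrow> weak_bisim \<Delta> (\<lambda>P Q. R Q P)"
  unfolding weak_bisim_def by blast

lemma weak_bisim_weak_trace:
  assumes "weak_bisim \<Delta> R" and "weak_trace \<Delta> P t P'" and "R P Q"
  shows "\<exists>Q'. weak_trace \<Delta> Q t Q' \<and> R P' Q'"
  using assms(2,3)
proof (induction arbitrary: Q rule: weak_trace.induct)
  case (weak_trace_Nil P)
  then show ?case by (auto intro: weak_trace.intros)
next
  case (weak_trace_step P l P1 t P2)
  with assms(1) obtain Q1 where "wstep \<Delta> Q l Q1" "R P1 Q1"
    unfolding weak_bisim_def by blast
  with weak_trace_step.IH show ?case by (blast intro: wstep_weak_trace)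
qed

fun is_spawn :: "'s gcon \<Rightarrow> bool" where
  "is_spawn cG = True"
| "is_spawn cGv = True"
| "is_spawn (cU k) = True"
| "is_spawn (cV k) = True"
| "is_spawn (cW w k) = True"
| "is_spawn _ = False"

fun is_emitter :: "'s gcon \<Rightarrow> bool" where
  "is_emitter cZ = True"
| "is_emitter (cU k) = True"
| "is_emitter (cV k) = True"
| "is_emitter (cW w k) = True"
| "is_emitter _ = False"

text \<open>Through visible K, which sees indices only (K = S) or letters only (K = I), exactly the
  actions that the loop of K cannot produce, the position of the index k among the letters of a
  W-constant is irrelevant; emission c is one trace along which the emitter c vanishes.\<close>

fun emission :: "(nat \<Rightarrow> 's list) \<Rightarrow> (nat \<Rightarrow> 's list) \<Rightarrow> 's gcon \<Rightarrow> 's gact list" where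
  "emission u v (cU k) = map Sym (u k) @ [Num k]"
| "emission u v (cV k) = map Sym (v k) @ [Num k]"
| "emission u v (cW w k) = map Sym w @ (if k = 0 then [] else [Num k])"
| "emission u v _ = []"

fun emissions :: "(nat \<Rightarrow> 's list) \<Rightarrow> (nat \<Rightarrow> 's list) \<Rightarrow> 's gcon list \<Rightarrow> 's gact list" where
  "emissions u v [] = []"
| "emissions u v (x # xs) = emission u v x @ emissions u v xs"

fun visible :: "'s gcon \<Rightarrow> 's gact \<Rightarrow> bool" where
  "visible cS (Num k) = True"
| "visible cI (Sym a) = True"
| "visible _ _ = False"

lemma visible_Num [simp]: "visible K (Num k) \<longleftrightarrow> K = cS"
  by (cases K) auto

lemma visible_Sym [simp]: "visible K (Sym a) \<longleftrightarrow> K = cI"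
  by (cases K) auto

lemma filter_visible_map_Sym [simp]:
  "filter (visible K) (map Sym w) = (if K = cI then map Sym w else [])"
  by (induction w) auto

lemma gRule_C:
  "gRule n u v cC l R \<longleftrightarrow> l = Act LamI \<and> R = Cst cI \<or> l = Act LamS \<and> R = Cst cS
     \<or> l = Tau \<and> R = Par (Cst cC) (Cst cG) \<or> l = Tau \<and> R = Par (Cst cC) (Cst cGv)"
  by (auto elim: gRule.cases intro: gRule.intros)

lemma gRule_S: "gRule n u v cS l R \<Longrightarrow> R = Cst cS \<and> (\<exists>a. l = Act (Sym a)) \<or> l = Act LamS"
  by (cases rule: gRule.cases) auto

lemma gRule_I: "gRule n u v cI l R \<Longrightarrow> R = Cst cI \<and> (\<exists>k. l = Act (Num k)) \<or> l = Act LamI"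
  by (cases rule: gRule.cases) auto

lemma gRule_Z: "gRule n u v cZ l R \<Longrightarrow> R = Eps"
  by (cases rule: gRule.cases) auto

lemma gRule_LamZ: "gRule n u v c (Act LamZ) R \<Longrightarrow> c = cZ"
  by (cases rule: gRule.cases) auto

lemma gRule_LamS_LamI: "gRule n u v c (Act lam) R \<Longrightarrow> lam = LamS \<or> lam = LamI \<Longrightarrow> c \<in> {cC, cS, cI}"
  by (cases rule: gRule.cases) auto

lemma gRule_spawn:
  "gRule n u v c l R \<Longrightarrow> is_spawn c \<Longrightarrow> l \<noteq> Act LamV \<Longrightarrow>
    R = Eps \<or> (\<exists>c'. R = Cst c' \<and> is_spawn c') \<or> (\<exists>c1 c2. R = Seq (Cst c1) (Cst c2) \<and> is_spawn c1 \<and> is_spawn c2)"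
  by (cases rule: gRule.cases) auto

lemma gRule_emitter:
  "gRule n u v c l R \<Longrightarrow> is_emitter c \<Longrightarrow>
    R = Eps \<and> subseq (filter (visible K) (lab_trace l)) (filter (visible K) (emission u v c))
    \<or> (\<exists>c'. R = Cst c' \<and> is_emitter c' \<and>
        subseq (filter (visible K) (lab_trace l @ emission u v c')) (filter (visible K) (emission u v c)))"
  by (cases rule: gRule.cases) (auto split: if_splits)

lemma threads_fire_at:
  assumes "threads P = Some (add_mset (c # rest) M0)" and "gRule n u v c l R"
  shows "\<exists>P'. step (gDelta n u v) P l P' \<and>
           threads P' = par_threads (Some M0) (threads (Seq R (seqs rest)))"
proof -
  have "(c, l, R) \<in> gDelta n u v" using assms(2) by (simp add: gDelta_def)
  from step_threads_complete[OF assms(1) _ this, of rest] show ?thesis by simp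
qed

text \<open>Processes reached from C || Z xs by silent moves and at most one of lambda_S, lambda_I:
  the control constant K, the thread Z xs as long as z holds, and threads of constants spawned by C.\<close>

definition control_state :: "'s gcon \<Rightarrow> 's gcon list \<Rightarrow> bool \<Rightarrow> 's gcon list multiset \<Rightarrow> bool" where
  "control_state K xs z M \<longleftrightarrow>
     (\<exists>J. M = add_mset [K] ((if z then {#cZ # xs#} else {#}) + J) \<and> (\<forall>t\<in>#J. \<forall>x\<in>set t. is_spawn x))"

lemma threads_spawn_rhs:
  assumes "gRule n u v c l R" "is_spawn c" "l \<noteq> Act LamV" "\<forall>x\<in>set rest. is_spawn x"
  shows "\<exists>ys. threads (Seq R (seqs rest)) = Some (thread ys) \<and> (\<forall>y\<in>set ys. is_spawn y)"
  using gRule_spawn[OF assms(1-3)]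
proof (elim disjE exE conjE)
  assume "R = Eps"
  then show ?thesis using assms(4) by (intro exI[of _ rest]) simp
next
  fix c' assume "R = Cst c'" "is_spawn c'"
  then show ?thesis using assms(4) by (intro exI[of _ "c' # rest"]) (simp add: thread_def)
next
  fix c1 c2 assume "R = Seq (Cst c1) (Cst c2)" "is_spawn c1" "is_spawn c2"
  then show ?thesis using assms(4) by (intro exI[of _ "c1 # c2 # rest"]) (simp add: thread_def)
qed

lemma control_state_tau_step:
  assumes inv: "control_state K xs z M" and K: "K \<in> {cC, cS, cI}" and xs: "\<forall>x\<in>set xs. is_spawn x"
    and rule: "gRule n u v c Tau R" and fired: "c # rest \<in># M"
  shows "\<exists>z' M'. par_threads (Some (M - {#c # rest#})) (threads (Seq R (seqs rest))) = Some M'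
           \<and> control_state K xs z' M' \<and> (z' \<longrightarrow> z)"
proof -
  define Zs where "Zs = (if z then {#cZ # xs#} else {#})"
  obtain J where M: "M = add_mset [K] (Zs + J)" and J: "\<forall>t\<in>#J. \<forall>x\<in>set t. is_spawn x"
    using inv unfolding control_state_def Zs_def by blast
  have "c # rest = [K] \<or> z \<and> c # rest = cZ # xs \<or> c # rest \<in># J"
    using fired M by (auto simp: Zs_def split: if_splits)
  then show ?thesis
  proof (elim disjE conjE)
    assume "c # rest = [K]"
    with rule K obtain g where "K = cC" "c = cC" "rest = []" "R = Par (Cst cC) (Cst g)" "is_spawn g"
      using gRule_S gRule_I by (fastforce simp: gRule_C)
    then have "par_threads (Some (M - {#c # rest#})) (threads (Seq R (seqs rest)))
        = Some (add_mset [K] (Zs + add_mset [g] J))"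
      using M by (simp add: thread_def)
    moreover have "control_state K xs z (add_mset [K] (Zs + add_mset [g] J))"
      unfolding control_state_def Zs_def using J \<open>is_spawn g\<close> by auto
    ultimately show ?thesis by blast
  next
    assume "z" "c # rest = cZ # xs"
    then have "R = Eps" "M - {#c # rest#} = add_mset [K] J" using rule gRule_Z M Zs_def by auto
    then have "par_threads (Some (M - {#c # rest#})) (threads (Seq R (seqs rest)))
        = Some (add_mset [K] (J + thread xs))"
      using \<open>c # rest = cZ # xs\<close> by simp
    moreover have "control_state K xs False (add_mset [K] (J + thread xs))"
      unfolding control_state_def using J xs by (auto simp: thread_def)
    ultimately show ?thesis by blast
  next
    assume t: "c # rest \<in># J"
    then have "is_spawn c" "\<forall>x\<in>set rest. is_spawn x" using J by auto
    with rule obtain ys where ys: "threads (Seq R (seqs rest)) = Some (thread ys)" "\<forall>y\<in>set ys. is_spawn y"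
      using threads_spawn_rhs by blast
    have "M - {#c # rest#} = add_mset [K] (Zs + (J - {#c # rest#}))"
      using M t by simp
    then have "par_threads (Some (M - {#c # rest#})) (threads (Seq R (seqs rest)))
        = Some (add_mset [K] (Zs + (J - {#c # rest#} + thread ys)))"
      using ys(1) by (simp add: add.assoc)
    moreover have "control_state K xs z (add_mset [K] (Zs + (J - {#c # rest#} + thread ys)))"
      unfolding control_state_def Zs_def using J ys(2)
      by (intro exI[of _ "J - {#c # rest#} + thread ys"]) (auto simp: thread_def dest: in_diffD)
    ultimately show ?thesis by blast
  qed
qed

lemma control_state_tau_steps:
  assumes "tau_steps (gDelta n u v) P P'" and "threads P = Some M" and "control_state K xs z M"
    and "K \<in> {cC, cS, cI}" and "\<forall>x\<in>set xs. is_spawn x"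
  shows "\<exists>z' M'. threads P' = Some M' \<and> control_state K xs z' M' \<and> (z' \<longrightarrow> z)"
  using assms(1) unfolding tau_steps_def
proof (induction rule: rtranclp_induct)
  case base
  then show ?case using assms(2,3) by blast
next
  case (step P1 P2)
  then obtain z1 M1 where M1: "threads P1 = Some M1" "control_state K xs z1 M1" "z1 \<longrightarrow> z"
    by blast
  from step_threads_sound[OF step(2) M1(1)] obtain c rest R where "c # rest \<in># M1"
    "gRule n u v c Tau R" "threads P2 = par_threads (Some (M1 - {#c # rest#})) (threads (Seq R (seqs rest)))"
    by (auto simp: gDelta_def)
  with control_state_tau_step[OF M1(2) assms(4,5)] M1(3) show ?case by metis
qed

lemma control_state_lambda_step:
  assumes "step (gDelta n u v) P (Act lam) P'" and "threads P = Some M" and "control_state cC xs z M"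
    and "lam = LamS \<and> K = cS \<or> lam = LamI \<and> K = cI"
  shows "\<exists>M'. threads P' = Some M' \<and> control_state K xs z M'"
proof -
  from step_threads_sound[OF assms(1,2)] obtain c rest R where fired: "c # rest \<in># M"
    "gRule n u v c (Act lam) R" "threads P' = par_threads (Some (M - {#c # rest#})) (threads (Seq R (seqs rest)))"
    by (auto simp: gDelta_def)
  obtain J where M: "M = add_mset [cC] ((if z then {#cZ # xs#} else {#}) + J)"
    and J: "\<forall>t\<in>#J. \<forall>x\<in>set t. is_spawn x"
    using assms(3) unfolding control_state_def by blast
  have "c \<in> {cC, cS, cI}" using gRule_LamS_LamI fired(2) assms(4) by blast
  then have "c # rest = [cC]" using fired(1) M J by (auto split: if_splits)
  then have "R = Cst K" using fired(2) assms(4) by (auto simp: gRule_C)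
  then have "threads P' = Some (add_mset [K] ((if z then {#cZ # xs#} else {#}) + J))"
    using fired(3) M \<open>c # rest = [cC]\<close> by (simp add: thread_def)
  moreover have "control_state K xs z (add_mset [K] ((if z then {#cZ # xs#} else {#}) + J))"
    unfolding control_state_def using J by blast
  ultimately show ?thesis by blast
qed

lemma control_state_no_LamZ_step:
  assumes "threads P = Some M" and "control_state K xs False M" and "K \<in> {cC, cS, cI}"
  shows "\<not> step (gDelta n u v) P (Act LamZ) P'"
proof
  assume "step (gDelta n u v) P (Act LamZ) P'"
  from step_threads_sound[OF this assms(1)] obtain c rest R where
    "c # rest \<in># M" "gRule n u v c (Act LamZ) R" by (auto simp: gDelta_def)
  then show False
    using gRule_LamZ assms(2,3) unfolding control_state_def by fastforce
qed

lemma control_emitters_step: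
  assumes rule: "gRule n u v c l R" and fired: "c # rest \<in># add_mset [K] (thread tt)"
    and K: "K = cS \<or> K = cI" and l: "l \<noteq> Act LamS" "l \<noteq> Act LamI"
    and tt: "\<forall>x\<in>set tt. is_emitter x"
  shows "\<exists>tt'. par_threads (Some (add_mset [K] (thread tt) - {#c # rest#})) (threads (Seq R (seqs rest)))
      = Some (add_mset [K] (thread tt')) \<and> (\<forall>x\<in>set tt'. is_emitter x) \<and>
      subseq (filter (visible K) (lab_trace l @ emissions u v tt')) (filter (visible K) (emissions u v tt))"
proof -
  have "c # rest = [K] \<or> c # rest = tt" using fired by (auto simp: thread_def split: if_splits)
  then show ?thesis
  proof
    assume "c # rest = [K]"
    with rule K l have "R = Cst K" "filter (visible K) (lab_trace l) = []"
      using gRule_S gRule_I by fastforce+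
    then show ?thesis using \<open>c # rest = [K]\<close> tt by (auto simp: thread_def)
  next
    assume tt_eq: "c # rest = tt"
    then have rest: "\<forall>x\<in>set rest. is_emitter x" and "is_emitter c" using tt by auto
    have M: "add_mset [K] (thread tt) - {#c # rest#} = {#[K]#}" using tt_eq by (auto simp: thread_def)
    from gRule_emitter[OF rule \<open>is_emitter c\<close>, of K] show ?thesis
    proof (elim disjE exE conjE)
      assume "R = Eps" and sub: "subseq (filter (visible K) (lab_trace l)) (filter (visible K) (emission u v c))"
      then show ?thesis
        using M tt_eq rest by (intro exI[of _ rest]) (auto intro: list_emb_append_mono)
    next
      fix c' assume "R = Cst c'" "is_emitter c'" and
        sub: "subseq (filter (visible K) (lab_trace l @ emission u v c')) (filter (visible K) (emission u v c))"
      then show ?thesis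
        using M tt_eq rest list_emb_append_mono[OF sub subseq_order.order_refl]
        by (intro exI[of _ "c' # rest"]) (auto simp: thread_def)
    qed
  qed
qed

lemma control_emitters_weak_trace:
  assumes "weak_trace (gDelta n u v) P tr P'" and "threads P = Some (add_mset [K] (thread tt))"
    and "\<forall>x\<in>set tt. is_emitter x" and "K = cS \<or> K = cI" and "LamS \<notin> set tr" "LamI \<notin> set tr"
  shows "subseq (filter (visible K) tr) (filter (visible K) (emissions u v tt))"
  using assms
proof (induction arbitrary: tt rule: weak_trace.induct)
  case (weak_trace_Nil P)
  then show ?case by simp
next
  case (weak_trace_step P l P1 t P2)
  from step_threads_sound[OF weak_trace_step.hyps(1) weak_trace_step.prems(1)] obtain c rest R where
    fired: "c # rest \<in># add_mset [K] (thread tt)" "gRule n u v c l R"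
      "threads P1 = par_threads (Some (add_mset [K] (thread tt) - {#c # rest#})) (threads (Seq R (seqs rest)))"
    by (auto simp: gDelta_def)
  have "l \<noteq> Act LamS" "l \<noteq> Act LamI" using weak_trace_step.prems(4,5) by auto
  with control_emitters_step[OF fired(2,1) weak_trace_step.prems(3)] weak_trace_step.prems(2)
  obtain tt' where tt': "threads P1 = Some (add_mset [K] (thread tt'))" "\<forall>x\<in>set tt'. is_emitter x"
    "subseq (filter (visible K) (lab_trace l @ emissions u v tt')) (filter (visible K) (emissions u v tt))"
    using fired(3) by metis
  have "subseq (filter (visible K) t) (filter (visible K) (emissions u v tt'))"
    using weak_trace_step.IH[OF tt'(1,2) weak_trace_step.prems(3)] weak_trace_step.prems(4,5) by simp
  then have "subseq (filter (visible K) (lab_trace l @ t)) (filter (visible K) (lab_trace l @ emissions u v tt'))"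
    by (simp add: subseq_append')
  then show ?case using tt'(3) by (rule subseq_order.trans)
qed

definition is_UV :: "nat \<Rightarrow> 's gcon \<Rightarrow> bool" where
  "is_UV n x \<longleftrightarrow> (\<exists>k\<in>{1..n}. x = cU k \<or> x = cV k)"

lemma W_weak_trace_letters:
  assumes "threads P = Some (add_mset (cW w k # ys) M0)"
    and "suffix w (u k) \<or> suffix w (v k)" and "k \<in> {1..n}"
  shows "\<exists>P'. weak_trace (gDelta n u v) P (map Sym w) P' \<and> threads P' = Some (add_mset (cW [] k # ys) M0)"
  using assms(1,2)
proof (induction w arbitrary: P)
  case Nil
  then show ?case by (auto intro: weak_trace_Nil)
next
  case (Cons a w)
  then have "isW n u v (cW (a # w) k)" using assms(3) unfolding isW_def by blast
  with assms(3) have "gRule n u v (cW (a # w) k) (Act (Sym a)) (Cst (cW w k))"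
    by (rule gRule.intros)
  from threads_fire_at[OF Cons.prems(1) this] obtain P1 where
    P1: "step (gDelta n u v) P (Act (Sym a)) P1" "threads P1 = Some (add_mset (cW w k # ys) M0)"
    by (auto simp: thread_def)
  have "suffix w (u k) \<or> suffix w (v k)" using Cons.prems(2) by (meson suffix_ConsD)
  with Cons.IH[OF P1(2)] obtain P' where
    "weak_trace (gDelta n u v) P1 (map Sym w) P'" "threads P' = Some (add_mset (cW [] k # ys) M0)"
    by blast
  with P1(1) show ?case by (auto intro: weak_trace_act_step)
qed

lemma UV_weak_trace_emission:
  assumes "threads P = Some (add_mset (x # ys) M0)" and "is_UV n x"
  shows "\<exists>P'. weak_trace (gDelta n u v) P (emission u v x) P' \<and> threads P' = Some (M0 + thread ys)"
proof -
  from assms(2) obtain k w where k: "k \<in> {1..n}" and x: "x = cU k \<and> w = u k \<or> x = cV k \<and> w = v k"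
    unfolding is_UV_def by blast
  then have rule: "gRule n u v x Tau (Cst (cW w k))" and emission: "emission u v x = map Sym w @ [Num k]"
    by (auto intro: gRule.intros)
  from threads_fire_at[OF assms(1) rule] obtain P1 where
    P1: "step (gDelta n u v) P Tau P1" "threads P1 = Some (add_mset (cW w k # ys) M0)"
    by (auto simp: thread_def)
  from x have "suffix w (u k) \<or> suffix w (v k)" by auto
  from W_weak_trace_letters[where u = u and v = v, OF P1(2) this k] obtain P2 where
    P2: "weak_trace (gDelta n u v) P1 (map Sym w) P2" "threads P2 = Some (add_mset (cW [] k # ys) M0)"
    by blast
  have "isW n u v (cW [] k)" "isW n u v (cW [] 0)" using k unfolding isW_def by auto
  then have "gRule n u v (cW [] k) (Act (Num k)) (Cst (cW [] 0))" "gRule n u v (cW [] 0) Tau Eps"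
    using k by (auto intro: gRule.intros)
  from threads_fire_at[OF P2(2) this(1)] obtain P3 where
    P3: "step (gDelta n u v) P2 (Act (Num k)) P3" "threads P3 = Some (add_mset (cW [] 0 # ys) M0)"
    by (auto simp: thread_def)
  from threads_fire_at[OF P3(2) \<open>gRule n u v (cW [] 0) Tau Eps\<close>] obtain P4 where
    P4: "step (gDelta n u v) P3 Tau P4" "threads P4 = Some (M0 + thread ys)"
    by auto
  from P3(1) P4(1) have "weak_trace (gDelta n u v) P2 [Num k] P4"
    by (auto intro: weak_trace_act_step weak_trace_tau_step weak_trace_Nil)
  with P1(1) P2(1) have "weak_trace (gDelta n u v) P (map Sym w @ [Num k]) P4"
    by (auto intro: weak_trace_tau_step weak_trace_append)
  then show ?thesis using emission P4(2) by auto
qed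

lemma UV_weak_trace_emissions:
  assumes "threads P = Some (M0 + thread ys)" and "\<forall>x\<in>set ys. is_UV n x"
  shows "\<exists>P'. weak_trace (gDelta n u v) P (emissions u v ys) P' \<and> threads P' = Some M0"
  using assms
proof (induction ys arbitrary: P)
  case Nil
  then show ?case by (auto simp: thread_def intro: weak_trace_Nil)
next
  case (Cons x ys)
  then have "threads P = Some (add_mset (x # ys) M0)" by (simp add: thread_def)
  with Cons.prems(2) obtain P1 where
    "weak_trace (gDelta n u v) P (emission u v x) P1" "threads P1 = Some (M0 + thread ys)"
    using UV_weak_trace_emission by fastforce
  moreover from this(2) Cons.IH Cons.prems(2) obtain P2 where
    "weak_trace (gDelta n u v) P1 (emissions u v ys) P2" "threads P2 = Some M0"
    by auto
  ultimately show ?case by (auto intro: weak_trace_append)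
qed

lemma control_state_wstep_lambda:
  assumes "wstep (gDelta n u v) P (Act lam) P'" and "threads P = Some M" and "control_state cC xs z M"
    and "lam = LamS \<and> K = cS \<or> lam = LamI \<and> K = cI" and "\<forall>x\<in>set xs. is_spawn x"
  shows "\<exists>z' M'. threads P' = Some M' \<and> control_state K xs z' M'"
proof -
  from assms(1) obtain P1 P2 where "tau_steps (gDelta n u v) P P1"
    "step (gDelta n u v) P1 (Act lam) P2" "tau_steps (gDelta n u v) P2 P'"
    by (auto simp: wstep_def)
  moreover have "K \<in> {cC, cS, cI}" using assms(4) by auto
  ultimately show ?thesis
    using control_state_tau_steps[OF _ assms(2,3) _ assms(5)]
      control_state_lambda_step[OF _ _ _ assms(4)] control_state_tau_steps[OF _ _ _ _ assms(5)]
    by (metis insertI1)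
qed

lemma control_state_no_weak_LamZ:
  assumes "threads P = Some M" and "control_state K xs False M" and "K \<in> {cC, cS, cI}"
    and "\<forall>x\<in>set xs. is_spawn x"
  shows "\<not> wstep (gDelta n u v) P (Act LamZ) P'"
proof
  assume "wstep (gDelta n u v) P (Act LamZ) P'"
  then obtain P1 P2 where "tau_steps (gDelta n u v) P P1" "step (gDelta n u v) P1 (Act LamZ) P2"
    by (auto simp: wstep_def)
  with control_state_tau_steps[OF _ assms] obtain M' where
    "threads P1 = Some M'" "control_state K xs False M'"
    by fastforce
  with \<open>step (gDelta n u v) P1 (Act LamZ) P2\<close> show False
    using control_state_no_LamZ_step assms(3) by blast
qed

lemma is_UV_imp_spawn_emitter: "is_UV n x \<Longrightarrow> is_spawn x \<and> is_emitter x"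
  by (auto simp: is_UV_def)

lemma visible_LamZ [simp]: "\<not> visible K LamZ"
  by (cases K) auto

lemma lambda_notin_emissions: "LamS \<notin> set (emissions u v xs)" "LamI \<notin> set (emissions u v xs)"
proof -
  have "set (emission u v x) \<subseteq> range Sym \<union> range Num" for x
    by (cases x) auto
  then show "LamS \<notin> set (emissions u v xs)" "LamI \<notin> set (emissions u v xs)"
    by (induction xs) auto
qed

lemma weak_bisim_control_state_keeps_Z:
  assumes "weak_bisim (gDelta n u v) R" and "R B A" and "threads A = Some (add_mset (cZ # ys) N)"
    and "threads B = Some M" and "control_state K xs z M" and "K \<in> {cC, cS, cI}"
    and "\<forall>x\<in>set xs. is_spawn x"
  shows z
proof (rule ccontr)
  assume "\<not> z"
  have "gRule n u v cZ (Act LamZ) Eps" by (rule gRule.intros)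
  with assms(3) obtain A' where "step (gDelta n u v) A (Act LamZ) A'"
    using threads_fire_at by blast
  with assms(1,2) obtain B' where "wstep (gDelta n u v) B (Act LamZ) B'"
    unfolding weak_bisim_def by blast
  moreover have "control_state K xs False M" using assms(5) \<open>\<not> z\<close> by simp
  ultimately show False using control_state_no_weak_LamZ[OF assms(4) _ assms(6,7)] by blast
qed

lemma bisimilar_emissions_subseq:
  fixes u v :: "nat \<Rightarrow> 's list" and lam :: "'s gact"
  assumes wb: "weak_bisim (gDelta n u v) R" and "R X Y"
    and X: "threads X = Some {#[cC], cZ # xsA#}" and Y: "threads Y = Some {#[cC], cZ # xsB#}"
    and xsA: "\<forall>x\<in>set xsA. is_UV n x" and xsB: "\<forall>x\<in>set xsB. is_UV n x"
    and lam: "lam = LamS \<and> K = cS \<or> lam = LamI \<and> K = cI"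
  shows "subseq (filter (visible K) (emissions u v xsA)) (filter (visible K) (emissions u v xsB))"
proof -
  have "gRule n u v cC (Act lam) (Cst K)" using lam by (auto simp: gRule_C)
  with Y obtain A where A: "step (gDelta n u v) Y (Act lam) A"
    "threads A = Some (add_mset [K] (thread (cZ # xsB)))"
    using threads_fire_at[of Y cC "[]"] by (fastforce simp: thread_def)
  with wb \<open>R X Y\<close> obtain B where B: "wstep (gDelta n u v) X (Act lam) B" "R B A"
    unfolding weak_bisim_def by blast
  have spawn: "\<forall>x\<in>set xsA. is_spawn x" using xsA is_UV_imp_spawn_emitter by blast
  have "control_state cC xsA True {#[cC], cZ # xsA#}"
    unfolding control_state_def by (intro exI[of _ "{#}"]) simp
  with control_state_wstep_lambda[OF B(1) X _ lam spawn] obtain z MB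
    where MB: "threads B = Some MB" "control_state K xsA z MB" by blast
  have "threads A = Some (add_mset (cZ # xsB) {#[K]#})" using A(2) by (simp add: thread_def)
  with weak_bisim_control_state_keeps_Z[OF wb B(2) _ MB] lam spawn have z by auto
  with MB obtain J where "threads B = Some (add_mset (cZ # xsA) (add_mset [K] J))"
    unfolding control_state_def by auto
  from threads_fire_at[OF this, of n u v "Act LamZ" Eps] obtain B1 where
    B1: "step (gDelta n u v) B (Act LamZ) B1" "threads B1 = Some (add_mset [K] J + thread xsA)"
    by (auto intro: gRule.intros)
  from UV_weak_trace_emissions[OF B1(2) xsA] obtain B2 where
    "weak_trace (gDelta n u v) B1 (emissions u v xsA) B2" by blast
  with B1(1) have "weak_trace (gDelta n u v) B (LamZ # emissions u v xsA) B2"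
    by (rule weak_trace_act_step)
  from weak_bisim_weak_trace[OF wb this B(2)] obtain A2 where
    "weak_trace (gDelta n u v) A (LamZ # emissions u v xsA) A2" by blast
  from control_emitters_weak_trace[OF this A(2)] lam xsB is_UV_imp_spawn_emitter lambda_notin_emissions
  show ?thesis by fastforce
qed

lemma emissions_append [simp]: "emissions u v (xs @ ys) = emissions u v xs @ emissions u v ys"
  by (induction xs) auto

lemma filter_visible_emissions_map_cU:
  "filter (visible cS) (emissions u v (map cU ks)) = map Num ks"
  "filter (visible cI) (emissions u v (map cU ks)) = map Sym (concat (map u ks))"
  by (induction ks) auto

lemma filter_visible_emissions_map_cV:
  "filter (visible cS) (emissions u v (map cV ks)) = map Num ks"
  "filter (visible cI) (emissions u v (map cV ks)) = map Sym (concat (map v ks))"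
  by (induction ks) auto

theorem lemma8:
  fixes n :: nat and u v :: "nat \<Rightarrow> ('s::finite) list"
    and vs1 vs2 us2 :: "nat list"
  assumes "CARD('s) \<ge> 2"
    and "\<forall>k\<in>{1..n}. u k \<noteq> [] \<and> v k \<noteq> []"
    and "set vs1 \<subseteq> {1..n}" and "set vs2 \<subseteq> {1..n}"
    and "set us2 \<subseteq> {1..n}" and "us2 \<noteq> []"
    and "wbisimilar (gDelta n u v)
           (Par (Cst cC) (Seq (Cst cZ) (seqs (map cV vs1))))
           (Par (Cst cC) (Seq (Cst cZ) (Seq (seqs (map cV vs2)) (seqs (map cU us2)))))"
  shows "pcp_solvable n u v"
proof -
  define xsA :: "'s gcon list" where "xsA = map cV vs1"
  define xsB :: "'s gcon list" where "xsB = map cV vs2 @ map cU us2"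
  obtain R where wb: "weak_bisim (gDelta n u v) R"
    and "R (Par (Cst cC) (Seq (Cst cZ) (seqs xsA)))
           (Par (Cst cC) (Seq (Cst cZ) (Seq (seqs (map cV vs2)) (seqs (map cU us2)))))"
    using assms(7) unfolding wbisimilar_def xsA_def by blast
  moreover have "threads (Par (Cst cC) (Seq (Cst cZ) (seqs xsA))) = Some {#[cC], cZ # xsA#}"
    by (simp add: thread_def)
  moreover have "threads (Par (Cst cC) (Seq (Cst cZ) (Seq (seqs (map cV vs2)) (seqs (map cU us2)))))
      = Some {#[cC], cZ # xsB#}"
    unfolding xsB_def by (simp add: thread_def)
  moreover have "\<forall>x\<in>set xsA. is_UV n x" "\<forall>x\<in>set xsB. is_UV n x"
    using assms(3-5) unfolding xsA_def xsB_def is_UV_def by auto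
  ultimately have "filter (visible K) (emissions u v xsA) = filter (visible K) (emissions u v xsB)"
    if "lam = LamS \<and> K = cS \<or> lam = LamI \<and> K = cI" for K :: "'s gcon" and lam :: "'s gact"
    using bisimilar_emissions_subseq[OF wb] bisimilar_emissions_subseq[OF weak_bisim_converse[OF wb]]
      that subseq_order.antisym by metis
  from this[of LamS cS] this[of LamI cI]
  have "vs1 = vs2 @ us2" "concat (map v vs1) = concat (map v vs2) @ concat (map u us2)"
    by (simp_all add: xsA_def xsB_def filter_visible_emissions_map_cU filter_visible_emissions_map_cV
        inj_def flip: map_append)
  then have "concat (map u us2) = concat (map v us2)" by simp
  then show ?thesis unfolding pcp_solvable_def using assms(5,6) by blast
qed

end
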